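(* In a hidden Markov model with multiple observation processes and a fixed policy $g$, the law $\mu_t$ of the information state $Z_t$ satisfies \[\mu_{t+1}=\sum_{i\in O}\sum_{y\in V}\int_{A_i}\big(z\cdot T\cdot M^{(i)}\big)_y\,\delta\big(r_{i,y}(z)\big)\,d\mu_t(z),\] where $\delta(\cdot)$ denotes the Dirac measure on $\mathcal P(S)$ and $z\in\mathcal P(S)\subset\mathbb R^n$ is treated as a row vector.
   Context: $(X_t)$ is a time-homogeneous Markov chain on $S=\{1,\dots,n\}$ with transition matrix $T$. $O$ is a finite index set; for $i\in O$, $(Y^{(i)}_t)$ is an observation process with values in $V=\{1,\dots,m\}$ and observation matrix $M^{(i)}$ ($n\times m$), $M^{(i)}_{jk}=\mathbb P(Y^{(i)}_t=k\mid X_t=j)$; observations depend only on the current state and do not affect future states (conditional independence as in a hidden Markov model). $\mathcal P(S)$ is the probability simplex in $\mathbb R^n$, $\delta(x)$ the point mass at $x\in S$. A (measurable) policy is a function $g:\mathcal P(S)\to O$, $A_i=g^{-1}\{i\}$; $I_0$ is fixed, $I_{t+1}=g(Z_t)$, $Y_t=Y^{(I_t)}_t$, and $Z_t=\mathbb P(X_t\mid Y_0,\dots,Y_t,I_0,\dots,I_t)\in\mathcal P(S)$ is the information state, with law $\mu_t$ (a probability measure on $\mathcal P(S)$). For $i\in O$, $y\in V$, $r_{i,y}(z)=\frac{\sum_{x,j}M^{(i)}_{x,y}T_{j,x}z_j\delta(x)}{\sum_{x,j}M^{(i)}_{x,y}T_{j,x}z_j}$ (terms in which the coefficient $(zTM^{(i)})_y$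 vanishes contribute zero). *)

theory Defs
  imports "HOL-Probability.Probability"
begin

text \<open>States S = the finite type 'n, observation values V = the finite type 'm,
  index set O = the finite type 'o. Distributions on S are row vectors in real^'n.\<close>

definition PS :: "(real^'n::finite) set" where
  "PS = {z. (\<forall>j. 0 \<le> z$j) \<and> (\<Sum>j\<in>UNIV. z$j) = 1}"

text \<open>r_{i,y}(z); division by zero gives 0, so terms with vanishing coefficient vanish.\<close>
definition rmap :: "real^'n^'n \<Rightarrow> ('o \<Rightarrow> real^'m^'n) \<Rightarrow> 'o \<Rightarrow> 'm \<Rightarrow> real^'n \<Rightarrow> real^'n"
  where "rmap T Mo i y z =
    (1 / (\<Sum>x\<in>UNIV. \<Sum>j\<in>UNIV. Mo i $ x $ y * T $ j $ x * z $ j)) *\<^sub>R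
    (\<Sum>x\<in>UNIV. \<Sum>j\<in>UNIV. (Mo i $ x $ y * T $ j $ x * z $ j) *\<^sub>R axis x 1)"

definition condZ :: "'a measure \<Rightarrow> (nat \<Rightarrow> 'a \<Rightarrow> 'n::finite) \<Rightarrow> ('a \<Rightarrow> 'h) \<Rightarrow> nat \<Rightarrow> 'a \<Rightarrow> real^'n"
  where "condZ P X H t \<omega> =
    (\<chi> x. measure P {\<omega>'\<in>space P. X t \<omega>' = x \<and> H \<omega>' = H \<omega>} /
          measure P {\<omega>'\<in>space P. H \<omega>' = H \<omega>})"

primrec hist :: "'a measure \<Rightarrow> (nat \<Rightarrow> 'a \<Rightarrow> 'n::finite) \<Rightarrow> ('o \<Rightarrow> nat \<Rightarrow> 'a \<Rightarrow> 'm)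
    \<Rightarrow> (real^'n \<Rightarrow> 'o) \<Rightarrow> 'o \<Rightarrow> nat \<Rightarrow> 'a \<Rightarrow> ('o \<times> 'm) list" where
  "hist P X Y g i0 0 = (\<lambda>\<omega>. [(i0, Y i0 0 \<omega>)])"
| "hist P X Y g i0 (Suc t) =
     (let H = hist P X Y g i0 t;
          I = (\<lambda>\<omega>. g (condZ P X H t \<omega>))
      in (\<lambda>\<omega>. H \<omega> @ [(I \<omega>, Y (I \<omega>) (Suc t) \<omega>)]))"

definition infoZ :: "'a measure \<Rightarrow> (nat \<Rightarrow> 'a \<Rightarrow> 'n::finite) \<Rightarrow> ('o \<Rightarrow> nat \<Rightarrow> 'a \<Rightarrow> 'm)
    \<Rightarrow> (real^'n \<Rightarrow> 'o) \<Rightarrow> 'o \<Rightarrow> nat \<Rightarrow> 'a \<Rightarrow> real^'n" where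
  "infoZ P X Y g i0 t = condZ P X (hist P X Y g i0 t) t"

definition infolaw :: "'a measure \<Rightarrow> (nat \<Rightarrow> 'a \<Rightarrow> 'n::finite) \<Rightarrow> ('o \<Rightarrow> nat \<Rightarrow> 'a \<Rightarrow> 'm)
    \<Rightarrow> (real^'n \<Rightarrow> 'o) \<Rightarrow> 'o \<Rightarrow> nat \<Rightarrow> (real^'n) measure" where
  "infolaw P X Y g i0 t = distr P borel (infoZ P X Y g i0 t)"

end

theory Submission
  imports Defs
begin

text \<open>
  The observed history H_t = ((I_0,Y_0),\<dots>,(I_t,Y_t)) takes finitely many values, and H_t = h is
  the event that the observation processes named in h show the values recorded in h, whose
  probability the joint law of the model gives in closed form. Hence
  \<mu>_t = \<Sum>_h P(H_t = h) \<delta>(z_h) is discrete, z_h being the posterior of X_t given h. Summing the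
  joint law over the unobserved states gives the one-step prediction
  P(H_t = h, Y^(i)_{t+1} = y) = P(H_t = h) (z_h T M^(i))_y, and Bayes' rule shows that
  Z_{t+1} = r_{i,y}(z_h) on this event. Summing over h, y and the action i = g(z_h) gives the
  formula.
\<close>

lemma (in finite_measure) measure_eq_sum_fibers:
  assumes "A \<in> sets M" "finite I" "\<And>\<omega>. \<omega> \<in> space M \<Longrightarrow> f \<omega> \<in> I"
    and "\<And>v. v \<in> I \<Longrightarrow> {\<omega>\<in>space M. f \<omega> = v} \<in> sets M"
  shows "measure M A = (\<Sum>v\<in>I. measure M {\<omega>\<in>A. f \<omega> = v})"
proof -
  have "measure M A = (\<Sum>v\<in>I. measure M (A \<inter> {\<omega>\<in>space M. f \<omega> = v}))"
    by (rule measure_real_sum_image_fn) (use assms in auto)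
  moreover have "A \<inter> {\<omega>\<in>space M. f \<omega> = v} = {\<omega>\<in>A. f \<omega> = v}" for v
    using sets.sets_into_space[OF assms(1)] by auto
  ultimately show ?thesis by simp
qed

lemma nn_integral_finite_valued:
  assumes "finite L" "\<And>\<omega>. \<omega> \<in> space M \<Longrightarrow> V \<omega> \<in> L"
    and "\<And>v. v \<in> L \<Longrightarrow> {\<omega>\<in>space M. V \<omega> = v} \<in> sets M"
  shows "(\<integral>\<^sup>+\<omega>. G (V \<omega>) \<partial>M) = (\<Sum>v\<in>L. G v * emeasure M {\<omega>\<in>space M. V \<omega> = v})"
proof -
  have "(\<integral>\<^sup>+\<omega>. G (V \<omega>) \<partial>M) = (\<integral>\<^sup>+\<omega>. (\<Sum>v\<in>L. G v * indicator {\<omega>\<in>space M. V \<omega> = v} \<omega>) \<partial>M)"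
    using assms(1,2) by (intro nn_integral_cong) (auto simp: indicator_def sum.If_cases)
  also have "\<dots> = (\<Sum>v\<in>L. G v * emeasure M {\<omega>\<in>space M. V \<omega> = v})"
    using assms(3) by (simp add: nn_integral_sum nn_integral_cmult_indicator)
  finally show ?thesis .
qed

lemma vector_matrix_mult_mult_nth:
  fixes z :: "'a::comm_semiring_1^'n"
  shows "((z v* A) v* B) $ y = (\<Sum>x\<in>UNIV. \<Sum>j\<in>UNIV. B $ x $ y * A $ j $ x * z $ j)"
  by (simp add: vector_matrix_mult_def sum_distrib_left sum_distrib_right mult_ac)

lemma rmap_nth:
  "rmap T Mo i y z $ x = (\<Sum>j\<in>UNIV. Mo i $ x $ y * T $ j $ x * z $ j) / ((z v* T) v* Mo i) $ y"
proof -
  have "(\<Sum>x'\<in>UNIV. \<Sum>j\<in>UNIV. (Mo i $ x' $ y * T $ j $ x' * z $ j) *\<^sub>R axis x' (1::real)) $ x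
      = (\<Sum>x'\<in>UNIV. (\<Sum>j\<in>UNIV. Mo i $ x' $ y * T $ j $ x' * z $ j) * axis x' 1 $ x)"
    by (simp add: sum_distrib_right)
  also have "\<dots> = (\<Sum>j\<in>UNIV. Mo i $ x $ y * T $ j $ x * z $ j)"
    by (simp add: axis_def if_distrib sum.delta cong: if_cong)
  finally show ?thesis by (simp add: rmap_def vector_matrix_mult_mult_nth)
qed

locale hmm_policy =
  fixes P :: "'a measure"
    and X :: "nat \<Rightarrow> 'a \<Rightarrow> 'n::finite"
    and Y :: "'o::finite \<Rightarrow> nat \<Rightarrow> 'a \<Rightarrow> 'm::finite"
    and T :: "real^'n^'n"
    and Mo :: "'o \<Rightarrow> real^'m^'n"
    and p0 :: "'n \<Rightarrow> real"
    and g :: "real^'n \<Rightarrow> 'o"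
    and i0 :: 'o
  assumes prob_space_P: "prob_space P"
    and measurable_X[measurable]: "\<And>s. X s \<in> P \<rightarrow>\<^sub>M count_space UNIV"
    and measurable_Y[measurable]: "\<And>i s. Y i s \<in> P \<rightarrow>\<^sub>M count_space UNIV"
    and joint_law: "\<And>u (xs :: nat \<Rightarrow> 'n) (is :: nat \<Rightarrow> 'o) (ys :: nat \<Rightarrow> 'm).
           measure P {\<omega>\<in>space P. \<forall>s\<le>u. X s \<omega> = xs s \<and> Y (is s) s \<omega> = ys s}
         = p0 (xs 0) * (\<Prod>s\<in>{1..u}. T $ xs (s - 1) $ xs s)
             * (\<Prod>s\<in>{0..u}. Mo (is s) $ xs s $ ys s)"
    and measurable_policy: "g \<in> restrict_space borel PS \<rightarrow>\<^sub>M count_space UNIV"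
begin

sublocale prob_space P by (rule prob_space_P)

abbreviation H :: "nat \<Rightarrow> 'a \<Rightarrow> ('o \<times> 'm) list" where
  "H \<equiv> hist P X Y g i0"

definition belief :: "nat \<Rightarrow> ('o \<times> 'm) list \<Rightarrow> real^'n" where
  "belief t h = (\<chi> x. prob {\<omega>\<in>space P. X t \<omega> = x \<and> H t \<omega> = h} / prob {\<omega>\<in>space P. H t \<omega> = h})"

lemma infoZ_eq_belief: "infoZ P X Y g i0 t = (\<lambda>\<omega>. belief t (H t \<omega>))"
  by (simp add: infoZ_def condZ_def belief_def fun_eq_iff)

lemma hist_Suc_eq:
  "H (Suc t) \<omega> = H t \<omega> @ [(g (belief t (H t \<omega>)), Y (g (belief t (H t \<omega>))) (Suc t) \<omega>)]"
  by (simp add: Let_def condZ_def belief_def)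

declare hist.simps(2)[simp del]

lemma length_hist[simp]: "length (H t \<omega>) = Suc t"
  by (induction t) (simp_all add: hist_Suc_eq)

lemma nth_hist_Suc: "s \<le> t \<Longrightarrow> H (Suc t) \<omega> ! s = H t \<omega> ! s"
  by (simp add: hist_Suc_eq nth_append)

lemma hist_eq_iff:
  "H t \<omega> = H t \<omega>' \<longleftrightarrow> (\<forall>s\<le>t. Y (fst (H t \<omega>' ! s)) s \<omega> = snd (H t \<omega>' ! s))"
proof (induction t)
  case 0
  then show ?case by auto
next
  case (Suc t)
  have "H (Suc t) \<omega> = H (Suc t) \<omega>' \<longleftrightarrow>
      H t \<omega> = H t \<omega>' \<and> Y (g (belief t (H t \<omega>'))) (Suc t) \<omega> = Y (g (belief t (H t \<omega>'))) (Suc t) \<omega>'"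
    by (auto simp: hist_Suc_eq)
  also have "\<dots> \<longleftrightarrow> (\<forall>s\<le>Suc t. Y (fst (H (Suc t) \<omega>' ! s)) s \<omega> = snd (H (Suc t) \<omega>' ! s))"
    by (auto simp: Suc.IH nth_hist_Suc le_Suc_eq) (auto simp: hist_Suc_eq nth_append)
  finally show ?case .
qed

lemma hist_eq_iff_obs:
  assumes "h \<in> range (H t)"
  shows "H t \<omega> = h \<longleftrightarrow> (\<forall>s\<le>t. Y (fst (h ! s)) s \<omega> = snd (h ! s))"
  using assms hist_eq_iff by auto

lemma sets_hist_fiber[measurable]: "{\<omega>\<in>space P. H t \<omega> = h} \<in> sets P"
proof (cases "h \<in> range (H t)")
  case True
  then have "{\<omega>\<in>space P. H t \<omega> = h} = {\<omega>\<in>space P. \<forall>s\<le>t. Y (fst (h ! s)) s \<omega> = snd (h ! s)}"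
    by (simp add: hist_eq_iff_obs)
  then show ?thesis by simp
next
  case False
  then have "{\<omega>\<in>space P. H t \<omega> = h} = {}" by auto
  then show ?thesis by (metis sets.empty_sets)
qed

lemma measurable_hist[measurable]: "H t \<in> P \<rightarrow>\<^sub>M count_space UNIV"
proof (subst measurable_count_space_eq2_countable, safe)
  fix h
  have "H t -` {h} \<inter> space P = {\<omega>\<in>space P. H t \<omega> = h}" by auto
  then show "H t -` {h} \<inter> space P \<in> sets P" by simp
qed simp

lemma finite_range_hist: "finite (range (H t))"
proof (rule finite_subset)
  show "range (H t) \<subseteq> {xs. set xs \<subseteq> UNIV \<and> length xs = Suc t}" by auto
  show "finite {xs. set xs \<subseteq> (UNIV :: ('o \<times> 'm) set) \<and> length xs = Suc t}"
    by (rule finite_lists_length_eq) simp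
qed

abbreviation path_prob :: "nat \<Rightarrow> (nat \<Rightarrow> 'n) \<Rightarrow> (nat \<Rightarrow> 'o) \<Rightarrow> (nat \<Rightarrow> 'm) \<Rightarrow> real" where
  "path_prob u w is ys \<equiv>
     p0 (w 0) * (\<Prod>s\<in>{1..u}. T $ w (s - 1) $ w s) * (\<Prod>s\<in>{0..u}. Mo (is s) $ w s $ ys s)"

lemma path_prob_Suc:
  "path_prob (Suc u) (w(Suc u := x)) is ys
     = path_prob u w is ys * T $ w u $ x * Mo (is (Suc u)) $ x $ ys (Suc u)"
proof -
  have "(\<Prod>s\<in>{1..u}. T $ (w(Suc u := x)) (s - 1) $ (w(Suc u := x)) s) = (\<Prod>s\<in>{1..u}. T $ w (s - 1) $ w s)"
    "(\<Prod>s\<in>{0..u}. Mo (is s) $ (w(Suc u := x)) s $ ys s) = (\<Prod>s\<in>{0..u}. Mo (is s) $ w s $ ys s)"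
    by (auto intro!: prod.cong)
  then show ?thesis by (simp add: atLeastAtMostSuc_conv atLeast0_atMost_Suc mult_ac)
qed

lemma prob_eq_sum_paths:
  assumes "A \<in> sets P"
  shows "prob A = (\<Sum>w\<in>PiE {..u} (\<lambda>_. UNIV). prob {\<omega>\<in>A. \<forall>s\<le>u. X s \<omega> = w s})"
proof -
  have restrict_eq: "restrict (\<lambda>s. X s \<omega>) {..u} = w \<longleftrightarrow> (\<forall>s\<le>u. X s \<omega> = w s)"
    if "w \<in> PiE {..u} (\<lambda>_. UNIV)" for w \<omega>
    using that by (auto simp: PiE_iff extensional_def fun_eq_iff)
  have "prob A = (\<Sum>w\<in>PiE {..u} (\<lambda>_. UNIV). prob {\<omega>\<in>A. restrict (\<lambda>s. X s \<omega>) {..u} = w})"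
    by (rule measure_eq_sum_fibers[OF assms]) (simp_all add: finite_PiE restrict_eq cong: conj_cong)
  then show ?thesis by (simp add: restrict_eq cong: conj_cong)
qed

lemma joint_forward:
  "prob {\<omega>\<in>space P. X (Suc u) \<omega> = x \<and> (\<forall>s\<le>Suc u. Y (is s) s \<omega> = ys s)}
   = (\<Sum>j\<in>UNIV. prob {\<omega>\<in>space P. X u \<omega> = j \<and> (\<forall>s\<le>u. Y (is s) s \<omega> = ys s)}
        * T $ j $ x * Mo (is (Suc u)) $ x $ ys (Suc u))"
proof -
  let ?W = "PiE {..u} (\<lambda>_. UNIV :: 'n set)"
  let ?c = "Mo (is (Suc u)) $ x $ ys (Suc u)"
  let ?next = "{\<omega>\<in>space P. X (Suc u) \<omega> = x \<and> (\<forall>s\<le>Suc u. Y (is s) s \<omega> = ys s)}"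
  let ?cur = "\<lambda>j. {\<omega>\<in>space P. X u \<omega> = j \<and> (\<forall>s\<le>u. Y (is s) s \<omega> = ys s)}"
  have next_path: "prob {\<omega>\<in>?next. \<forall>s\<le>u. X s \<omega> = w s} = path_prob u w is ys * T $ w u $ x * ?c" for w
  proof -
    have "{\<omega>\<in>?next. \<forall>s\<le>u. X s \<omega> = w s}
        = {\<omega>\<in>space P. \<forall>s\<le>Suc u. X s \<omega> = (w(Suc u := x)) s \<and> Y (is s) s \<omega> = ys s}"
      by (auto simp: le_Suc_eq)
    then show ?thesis by (simp only: joint_law path_prob_Suc)
  qed
  have cur_path: "prob {\<omega>\<in>?cur j. \<forall>s\<le>u. X s \<omega> = w s} = (if w u = j then path_prob u w is ys else 0)"
    for w j
  proof -
    have "{\<omega>\<in>?cur j. \<forall>s\<le>u. X s \<omega> = w s}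
        = (if w u = j then {\<omega>\<in>space P. \<forall>s\<le>u. X s \<omega> = w s \<and> Y (is s) s \<omega> = ys s} else {})"
      by auto
    then show ?thesis by (simp only: if_distrib[of prob] joint_law) simp
  qed
  have "prob ?next = (\<Sum>w\<in>?W. prob {\<omega>\<in>?next. \<forall>s\<le>u. X s \<omega> = w s})"
    by (rule prob_eq_sum_paths) measurable
  also have "\<dots> = (\<Sum>w\<in>?W. \<Sum>j\<in>UNIV. (if w u = j then path_prob u w is ys else 0) * T $ j $ x * ?c)"
    by (simp only: next_path) (simp add: if_distrib[of "\<lambda>a. a * _"] sum.delta cong: if_cong)
  also have "\<dots> = (\<Sum>j\<in>UNIV. (\<Sum>w\<in>?W. prob {\<omega>\<in>?cur j. \<forall>s\<le>u. X s \<omega> = w s}) * T $ j $ x * ?c)"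
    by (subst sum.swap) (simp only: cur_path sum_distrib_right)
  also have "\<dots> = (\<Sum>j\<in>UNIV. prob (?cur j) * T $ j $ x * ?c)"
    by (subst prob_eq_sum_paths[where u = u]) simp_all
  finally show ?thesis .
qed

lemma joint_next_state:
  assumes "h \<in> range (H t)"
  shows "prob {\<omega>\<in>space P. X (Suc t) \<omega> = x \<and> H t \<omega> = h \<and> Y i (Suc t) \<omega> = y}
       = (\<Sum>j\<in>UNIV. prob {\<omega>\<in>space P. X t \<omega> = j \<and> H t \<omega> = h} * T $ j $ x * Mo i $ x $ y)"
proof -
  define "is" where "is s = (if s \<le> t then fst (h ! s) else i)" for s
  define ys where "ys s = (if s \<le> t then snd (h ! s) else y)" for s
  have cur: "H t \<omega> = h \<longleftrightarrow> (\<forall>s\<le>t. Y (is s) s \<omega> = ys s)" for \<omega>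
    using hist_eq_iff_obs[OF assms] by (simp add: is_def ys_def)
  have obs_next: "H t \<omega> = h \<and> Y i (Suc t) \<omega> = y \<longleftrightarrow> (\<forall>s\<le>Suc t. Y (is s) s \<omega> = ys s)" for \<omega>
    by (auto simp: cur le_Suc_eq is_def ys_def)
  have "{\<omega>\<in>space P. X (Suc t) \<omega> = x \<and> H t \<omega> = h \<and> Y i (Suc t) \<omega> = y}
      = {\<omega>\<in>space P. X (Suc t) \<omega> = x \<and> (\<forall>s\<le>Suc t. Y (is s) s \<omega> = ys s)}"
    "\<And>j. {\<omega>\<in>space P. X t \<omega> = j \<and> H t \<omega> = h}
      = {\<omega>\<in>space P. X t \<omega> = j \<and> (\<forall>s\<le>t. Y (is s) s \<omega> = ys s)}"
    using cur obs_next by auto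
  moreover have "is (Suc t) = i" "ys (Suc t) = y" by (simp_all add: is_def ys_def)
  ultimately show ?thesis using joint_forward[of t x "is" ys] by simp
qed

lemma prob_hist_eq_sum_state:
  "prob {\<omega>\<in>space P. H t \<omega> = h} = (\<Sum>j\<in>UNIV. prob {\<omega>\<in>space P. X t \<omega> = j \<and> H t \<omega> = h})"
  by (subst measure_eq_sum_fibers[where f = "X t" and I = UNIV]) (auto simp: conj_ac)

lemma prob_hist_obs_eq_sum_state:
  "prob {\<omega>\<in>space P. H t \<omega> = h \<and> Y i (Suc t) \<omega> = y}
     = (\<Sum>x\<in>UNIV. prob {\<omega>\<in>space P. X (Suc t) \<omega> = x \<and> H t \<omega> = h \<and> Y i (Suc t) \<omega> = y})"
  by (subst measure_eq_sum_fibers[where f = "X (Suc t)" and I = UNIV]) (auto simp: conj_ac)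

lemma belief_in_PS: "prob {\<omega>\<in>space P. H t \<omega> = h} \<noteq> 0 \<Longrightarrow> belief t h \<in> PS"
  using prob_hist_eq_sum_state[of t h]
  by (auto simp: PS_def belief_def sum_divide_distrib[symmetric] intro!: divide_nonneg_nonneg sum_nonneg)

lemma prob_hist_obs_prediction:
  assumes "h \<in> range (H t)"
  shows "prob {\<omega>\<in>space P. H t \<omega> = h \<and> Y i (Suc t) \<omega> = y}
       = prob {\<omega>\<in>space P. H t \<omega> = h} * ((belief t h v* T) v* Mo i) $ y"
proof -
  let ?p = "prob {\<omega>\<in>space P. H t \<omega> = h}"
  let ?m = "\<lambda>j. prob {\<omega>\<in>space P. X t \<omega> = j \<and> H t \<omega> = h}"
  have cancel: "?p * (?m j / ?p) = ?m j" for j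
  proof (cases "?p = 0")
    case True
    have "?m j \<le> ?p" by (rule finite_measure_mono) auto
    then show ?thesis using True by (simp add: measure_le_0_iff)
  qed simp
  have "?p * ((belief t h v* T) v* Mo i) $ y
      = (\<Sum>x\<in>UNIV. \<Sum>j\<in>UNIV. Mo i $ x $ y * T $ j $ x * (?p * (?m j / ?p)))"
    unfolding vector_matrix_mult_mult_nth sum_distrib_left
    by (intro sum.cong refl) (simp add: belief_def)
  also have "\<dots> = (\<Sum>x\<in>UNIV. \<Sum>j\<in>UNIV. ?m j * T $ j $ x * Mo i $ x $ y)"
    by (simp only: cancel mult_ac)
  also have "\<dots> = prob {\<omega>\<in>space P. H t \<omega> = h \<and> Y i (Suc t) \<omega> = y}"
    by (simp add: prob_hist_obs_eq_sum_state joint_next_state[OF assms])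
  finally show ?thesis ..
qed

lemma hist_Suc_eq_append_iff:
  "H (Suc t) \<omega> = h @ [(i, y)] \<longleftrightarrow> H t \<omega> = h \<and> i = g (belief t h) \<and> Y i (Suc t) \<omega> = y"
  by (auto simp: hist_Suc_eq)

lemma belief_Suc:
  assumes "h \<in> range (H t)" and "i = g (belief t h)"
    and "prob {\<omega>\<in>space P. H t \<omega> = h \<and> Y i (Suc t) \<omega> = y} \<noteq> 0"
  shows "belief (Suc t) (h @ [(i, y)]) = rmap T Mo i y (belief t h)"
proof -
  let ?p = "prob {\<omega>\<in>space P. H t \<omega> = h}"
  let ?q = "prob {\<omega>\<in>space P. H t \<omega> = h \<and> Y i (Suc t) \<omega> = y}"
  let ?n = "\<lambda>x. prob {\<omega>\<in>space P. X (Suc t) \<omega> = x \<and> H t \<omega> = h \<and> Y i (Suc t) \<omega> = y}"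
  have "?p \<noteq> 0"
    using assms(3) prob_hist_obs_prediction[OF assms(1)] by auto
  have "belief (Suc t) (h @ [(i, y)]) $ x = ?n x / ?q" for x
    using assms(2) by (simp add: belief_def hist_Suc_eq_append_iff conj_ac)
  moreover have "rmap T Mo i y (belief t h) $ x = (?n x / ?p) / (?q / ?p)" for x
    using \<open>?p \<noteq> 0\<close>
    by (simp add: rmap_nth prob_hist_obs_prediction[OF assms(1)] joint_next_state[OF assms(1)]
        belief_def sum_divide_distrib mult_ac)
  ultimately show ?thesis
    using \<open>?p \<noteq> 0\<close> by (simp add: vec_eq_iff)
qed

lemma emeasure_hist_next_belief:
  assumes "h \<in> range (H t)"
  defines "z \<equiv> belief t h"
  shows "indicator B (belief (Suc t) (h @ [(g z, y)]))
           * emeasure P {\<omega>\<in>space P. H t \<omega> = h \<and> Y (g z) (Suc t) \<omega> = y}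
       = ennreal (((z v* T) v* Mo (g z)) $ y) * indicator B (rmap T Mo (g z) y z)
           * emeasure P {\<omega>\<in>space P. H t \<omega> = h}"
proof -
  let ?p = "prob {\<omega>\<in>space P. H t \<omega> = h}"
  let ?q = "prob {\<omega>\<in>space P. H t \<omega> = h \<and> Y (g z) (Suc t) \<omega> = y}"
  let ?d = "((z v* T) v* Mo (g z)) $ y"
  have q: "?q = ?p * ?d"
    unfolding z_def by (rule prob_hist_obs_prediction[OF assms(1)])
  show ?thesis
  proof (cases "?q = 0")
    case True
    then have "?p = 0 \<or> ?d = 0" using q by simp
    then show ?thesis using True by (auto simp: emeasure_eq_measure)
  next
    case False
    then have "?p \<noteq> 0" using q by auto
    then have "?d = ?q / ?p" using q by simp
    then have "?d \<ge> 0" by simp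
    then have "ennreal ?d * ennreal ?p = ennreal ?q"
      using q by (simp add: ennreal_mult[symmetric] mult.commute)
    moreover have "belief (Suc t) (h @ [(g z, y)]) = rmap T Mo (g z) y z"
      unfolding z_def by (rule belief_Suc[OF assms(1) refl False[unfolded z_def]])
    ultimately show ?thesis by (simp add: emeasure_eq_measure mult_ac)
  qed
qed

lemma sets_policy_region: "{z\<in>PS. g z = i} \<in> sets borel"
proof -
  have "PS \<in> sets (borel :: (real^'n) measure)" unfolding PS_def by measurable
  moreover have "{z\<in>PS. g z = i} \<in> sets (restrict_space borel PS)"
    using measurable_sets[OF measurable_policy, of "{i}"]
    by (simp add: space_restrict_space vimage_def Int_def conj_commute)
  ultimately show ?thesis using sets_restrict_space_iff[of PS borel] by auto
qed

lemma borel_measurable_integrand: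
  assumes "B \<in> sets borel"
  shows "(\<lambda>z. ennreal (((z v* T) v* Mo i) $ y) * indicator B (rmap T Mo i y z) * indicator {z\<in>PS. g z = i} z)
     \<in> borel_measurable borel"
proof -
  have "(\<lambda>z::real^'n. ((z v* T) v* Mo i) $ y) \<in> borel_measurable borel"
    unfolding vector_matrix_mult_mult_nth by measurable
  moreover have "rmap T Mo i y \<in> borel_measurable borel"
    unfolding rmap_def by measurable
  ultimately show ?thesis
    using assms sets_policy_region by measurable
qed

lemma nn_integral_infolaw:
  assumes "f \<in> borel_measurable borel"
  shows "(\<integral>\<^sup>+z. f z \<partial>infolaw P X Y g i0 t)
       = (\<Sum>h\<in>range (H t). f (belief t h) * emeasure P {\<omega>\<in>space P. H t \<omega> = h})"
proof -
  have "(\<integral>\<^sup>+z. f z \<partial>infolaw P X Y g i0 t) = (\<integral>\<^sup>+\<omega>. f (belief t (H t \<omega>)) \<partial>P)"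
    unfolding infolaw_def infoZ_eq_belief using assms by (intro nn_integral_distr) measurable
  also have "\<dots> = (\<Sum>h\<in>range (H t). f (belief t h) * emeasure P {\<omega>\<in>space P. H t \<omega> = h})"
    by (rule nn_integral_finite_valued) (simp_all add: finite_range_hist)
  finally show ?thesis .
qed

lemma emeasure_infolaw_Suc:
  assumes [measurable]: "B \<in> sets borel"
  shows "emeasure (infolaw P X Y g i0 (Suc t)) B
       = (\<Sum>h\<in>range (H t). \<Sum>y\<in>UNIV. indicator B (belief (Suc t) (h @ [(g (belief t h), y)]))
            * emeasure P {\<omega>\<in>space P. H t \<omega> = h \<and> Y (g (belief t h)) (Suc t) \<omega> = y})"
proof -
  let ?V = "\<lambda>\<omega>. (H t \<omega>, Y (g (belief t (H t \<omega>))) (Suc t) \<omega>)"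
  define G where "G = (\<lambda>(h, y). indicator B (belief (Suc t) (h @ [(g (belief t h), y)])) :: ennreal)"
  have "emeasure (infolaw P X Y g i0 (Suc t)) B = (\<integral>\<^sup>+z. indicator B z \<partial>infolaw P X Y g i0 (Suc t))"
    using assms by (simp add: infolaw_def)
  also have "\<dots> = (\<integral>\<^sup>+\<omega>. indicator B (belief (Suc t) (H (Suc t) \<omega>)) \<partial>P)"
    unfolding infolaw_def infoZ_eq_belief by (intro nn_integral_distr) measurable
  also have "\<dots> = (\<integral>\<^sup>+\<omega>. G (?V \<omega>) \<partial>P)"
    by (simp add: hist_Suc_eq G_def)
  also have "\<dots> = (\<Sum>v\<in>range (H t) \<times> UNIV. G v * emeasure P {\<omega>\<in>space P. ?V \<omega> = v})"
  proof (rule nn_integral_finite_valued)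
    fix v :: "('o \<times> 'm) list \<times> 'm"
    obtain h y where "v = (h, y)" by (cases v)
    then have "{\<omega>\<in>space P. ?V \<omega> = v} = {\<omega>\<in>space P. H t \<omega> = h \<and> Y (g (belief t h)) (Suc t) \<omega> = y}"
      by auto
    then show "{\<omega>\<in>space P. ?V \<omega> = v} \<in> sets P" by simp
  qed (simp_all add: finite_range_hist)
  also have "\<dots> = (\<Sum>h\<in>range (H t). \<Sum>y\<in>UNIV. indicator B (belief (Suc t) (h @ [(g (belief t h), y)]))
      * emeasure P {\<omega>\<in>space P. H t \<omega> = h \<and> Y (g (belief t h)) (Suc t) \<omega> = y})"
    unfolding sum.cartesian_product G_def by (intro sum.cong refl) (auto split: prod.splits cong: conj_cong)
  finally show ?thesis .
qed

lemma emeasure_infolaw_Suc_eq: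
  assumes [measurable]: "B \<in> sets borel"
  shows "emeasure (infolaw P X Y g i0 (Suc t)) B
       = (\<Sum>i\<in>UNIV. \<Sum>y\<in>UNIV.
              \<integral>\<^sup>+ z\<in>{z\<in>PS. g z = i}.
                 ennreal (((z v* T) v* Mo i) $ y) * indicator B (rmap T Mo i y z)
              \<partial>(infolaw P X Y g i0 t))"
proof -
  let ?e = "\<lambda>h. emeasure P {\<omega>\<in>space P. H t \<omega> = h}"
  let ?f = "\<lambda>i y z. ennreal (((z v* T) v* Mo i) $ y) * indicator B (rmap T Mo i y z)"
  have in_PS: "?e h \<noteq> 0 \<Longrightarrow> belief t h \<in> PS" for h
    using belief_in_PS[of t h] by (auto simp: emeasure_eq_measure)
  let ?F = "\<lambda>h y i. ?f i y (belief t h) * indicator {z\<in>PS. g z = i} (belief t h) * ?e h"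
  have "(\<Sum>i\<in>UNIV. \<Sum>y\<in>UNIV. \<integral>\<^sup>+ z\<in>{z\<in>PS. g z = i}. ?f i y z \<partial>(infolaw P X Y g i0 t))
      = (\<Sum>i\<in>UNIV. \<Sum>y\<in>UNIV. \<Sum>h\<in>range (H t). ?F h y i)"
    by (simp add: nn_integral_infolaw borel_measurable_integrand)
  also have "\<dots> = (\<Sum>i\<in>UNIV. \<Sum>h\<in>range (H t). \<Sum>y\<in>UNIV. ?F h y i)"
    by (intro sum.cong refl sum.swap)
  also have "\<dots> = (\<Sum>h\<in>range (H t). \<Sum>i\<in>UNIV. \<Sum>y\<in>UNIV. ?F h y i)"
    by (rule sum.swap)
  also have "\<dots> = (\<Sum>h\<in>range (H t). \<Sum>y\<in>UNIV. \<Sum>i\<in>UNIV. ?F h y i)"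
    by (intro sum.cong refl sum.swap)
  also have "\<dots> = (\<Sum>h\<in>range (H t). \<Sum>y\<in>UNIV. ?f (g (belief t h)) y (belief t h) * ?e h)"
  proof (intro sum.cong refl)
    fix h y
    have "?F h y i = (if i = g (belief t h) then ?f i y (belief t h) * ?e h else 0)" for i
      using in_PS[of h] by (auto simp: indicator_def)
    then show "(\<Sum>i\<in>UNIV. ?F h y i) = ?f (g (belief t h)) y (belief t h) * ?e h"
      by simp
  qed
  also have "\<dots> = emeasure (infolaw P X Y g i0 (Suc t)) B"
    by (simp add: emeasure_infolaw_Suc emeasure_hist_next_belief)
  finally show ?thesis ..
qed

end

theorem lemma2p13:
  fixes P :: "'a measure"
    and X :: "nat \<Rightarrow> 'a \<Rightarrow> 'n::finite"
    and Y :: "'o::finite \<Rightarrow> nat \<Rightarrow> 'a \<Rightarrow> 'm::finite"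
    and T :: "real^'n^'n"
    and Mo :: "'o \<Rightarrow> real^'m^'n"
    and p0 :: "'n \<Rightarrow> real"
    and g :: "real^'n \<Rightarrow> 'o"
    and i0 :: 'o
    and t :: nat
  assumes "prob_space P"
    and "\<And>s. X s \<in> P \<rightarrow>\<^sub>M count_space UNIV"
    and "\<And>i s. Y i s \<in> P \<rightarrow>\<^sub>M count_space UNIV"
    and "\<And>j x. 0 \<le> T $ j $ x"
    and "\<And>j. (\<Sum>x\<in>UNIV. T $ j $ x) = 1"
    and "\<And>i x y. 0 \<le> Mo i $ x $ y"
    and "\<And>i x. (\<Sum>y\<in>UNIV. Mo i $ x $ y) = 1"
    and "\<And>u (xs :: nat \<Rightarrow> 'n) (is :: nat \<Rightarrow> 'o) (ys :: nat \<Rightarrow> 'm).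
           measure P {\<omega>\<in>space P. \<forall>s\<le>u. X s \<omega> = xs s \<and> Y (is s) s \<omega> = ys s}
         = p0 (xs 0) * (\<Prod>s\<in>{1..u}. T $ xs (s - 1) $ xs s)
             * (\<Prod>s\<in>{0..u}. Mo (is s) $ xs s $ ys s)"
    and "g \<in> restrict_space borel PS \<rightarrow>\<^sub>M count_space UNIV"
  shows "\<forall>B\<in>sets borel.
           emeasure (infolaw P X Y g i0 (Suc t)) B
         = (\<Sum>i\<in>UNIV. \<Sum>y\<in>UNIV.
              \<integral>\<^sup>+ z\<in>{z\<in>PS. g z = i}.
                 ennreal (((z v* T) v* Mo i) $ y) * indicator B (rmap T Mo i y z)
              \<partial>(infolaw P X Y g i0 t))"
proof -
  interpret hmm_policy P X Y T Mo p0 g i0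
    by (rule hmm_policy.intro[OF assms(1-3,8,9)])
  show ?thesis
    using emeasure_infolaw_Suc_eq by blast
qed

end
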